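(* Let $X$ be a countably infinite set. The lattice $\mathrm{Cl}_{loc}(X)$ of local clones on $X$ does not embed (as a lattice) into the clone lattice $\mathrm{Cl}(A)$ over any finite set $A$.
   Context: For a set $Y$, a clone on $Y$ is a set of finitary operations on $Y$ containing all projections and closed under composition; $\mathrm{Cl}(Y)$ is the lattice of all clones on $Y$ ordered by inclusion. Giving $X$ the discrete topology and $X^{X^n}$ the product topology, a clone on $X$ is local if for each $n\ge1$ its set of $n$-ary operations is closed in $X^{X^n}$; equivalently, an $n$-ary operation $g$ belongs to the clone whenever for every finite $B\subseteq X^n$ some $n$-ary operation of the clone agrees with $g$ on $B$. $\mathrm{Cl}_{loc}(X)$ is the complete lattice of local clones on $X$ ordered by inclusion. A lattice embedding is an injective map preserving binary meets and joins. *)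

theory Defs
  imports "HOL-Library.Countable_Set"
begin

text \<open>A finitary operation on a set Y is represented as a pair (n, f) where n \<ge> 1 is
the arity and f acts on argument lists of length n with entries in Y; outside of
that domain f is fixed to undefined (so operations are extensional).\<close>

type_synonym 'a operation = "nat \<times> ('a list \<Rightarrow> 'a)"

definition args :: "'a set \<Rightarrow> nat \<Rightarrow> 'a list set" where
  "args Y n = {xs. length xs = n \<and> set xs \<subseteq> Y}"

definition is_op :: "'a set \<Rightarrow> 'a operation \<Rightarrow> bool" where
  "is_op Y p \<longleftrightarrow> fst p \<ge> 1 \<and> (\<forall>xs\<in>args Y (fst p). snd p xs \<in> Y)
      \<and> (\<forall>xs. xs \<notin> args Y (fst p) \<longrightarrow> snd p xs = undefined)"

definition proj :: "'a set \<Rightarrow> nat \<Rightarrow> nat \<Rightarrow> 'a operation" where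
  "proj Y n i = (n, \<lambda>xs. if xs \<in> args Y n then xs ! i else undefined)"

definition compose :: "'a set \<Rightarrow> 'a operation \<Rightarrow> 'a operation list \<Rightarrow> 'a operation" where
  "compose Y f gs = (fst (hd gs),
     \<lambda>xs. if xs \<in> args Y (fst (hd gs)) then snd f (map (\<lambda>g. snd g xs) gs) else undefined)"

definition clone :: "'a set \<Rightarrow> 'a operation set \<Rightarrow> bool" where
  "clone Y C \<longleftrightarrow> (\<forall>p\<in>C. is_op Y p)
     \<and> (\<forall>n i. 1 \<le> n \<and> i < n \<longrightarrow> proj Y n i \<in> C)
     \<and> (\<forall>f gs m. f \<in> C \<and> length gs = fst f \<and> set gs \<subseteq> C \<and> (\<forall>g\<in>set gs. fst g = m)
           \<longrightarrow> compose Y f gs \<in> C)"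

definition Cl :: "'a set \<Rightarrow> 'a operation set set" where
  "Cl Y = {C. clone Y C}"

text \<open>Local clones: closed in the topology of pointwise convergence, stated via
the finite-interpolation characterisation.\<close>
definition local_clone :: "'a set \<Rightarrow> 'a operation set \<Rightarrow> bool" where
  "local_clone X C \<longleftrightarrow> clone X C \<and>
     (\<forall>g. is_op X g \<and>
          (\<forall>B. finite B \<and> B \<subseteq> args X (fst g) \<longrightarrow>
               (\<exists>f\<in>C. fst f = fst g \<and> (\<forall>xs\<in>B. snd f xs = snd g xs)))
        \<longrightarrow> g \<in> C)"

definition Cl_loc :: "'a set \<Rightarrow> 'a operation set set" where
  "Cl_loc X = {C. local_clone X C}"

definition is_glb :: "'b set set \<Rightarrow> 'b set \<Rightarrow> 'b set \<Rightarrow> 'b set \<Rightarrow> bool" where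
  "is_glb L a b c \<longleftrightarrow> c \<in> L \<and> c \<subseteq> a \<and> c \<subseteq> b \<and> (\<forall>d\<in>L. d \<subseteq> a \<and> d \<subseteq> b \<longrightarrow> d \<subseteq> c)"

definition is_lub :: "'b set set \<Rightarrow> 'b set \<Rightarrow> 'b set \<Rightarrow> 'b set \<Rightarrow> bool" where
  "is_lub L a b c \<longleftrightarrow> c \<in> L \<and> a \<subseteq> c \<and> b \<subseteq> c \<and> (\<forall>d\<in>L. a \<subseteq> d \<and> b \<subseteq> d \<longrightarrow> c \<subseteq> d)"

definition lattice_embedding :: "'b set set \<Rightarrow> 'c set set \<Rightarrow> ('b set \<Rightarrow> 'c set) \<Rightarrow> bool" where
  "lattice_embedding L1 L2 h \<longleftrightarrow> h ` L1 \<subseteq> L2 \<and> inj_on h L1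
     \<and> (\<forall>a\<in>L1. \<forall>b\<in>L1. \<forall>c. is_glb L1 a b c \<longrightarrow> is_glb L2 (h a) (h b) (h c))
     \<and> (\<forall>a\<in>L1. \<forall>b\<in>L1. \<forall>c. is_lub L1 a b c \<longrightarrow> is_lub L2 (h a) (h b) (h c))"

end

theory Submission
  imports Defs
begin

text \<open>
  For a retraction v of X (an idempotent self-map), the operations v(x_j) together
  with the projections form a clone with finitely many operations of each arity,
  hence a local clone. Fix a0 \<noteq> a1 in X and put Y = X - {a0, a1}. For T \<subseteq> Y, the
  retraction fixing T and sending everything else to a0 yields a local clone C_T
  strictly above the clone P of projections, and C_T \<inter> C_T' = P whenever T \<noteq> T'.
  A lattice embedding h into Cl(A) preserves these meets, and meets in Cl(A) are
  intersections, so picking an operation in h(C_T) - h(P) for every T is injective.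
  This maps the uncountable set Pow Y into the countably many finitary operations
  on the finite set A.
\<close>

lemma uncountable_Pow: "infinite Y \<Longrightarrow> uncountable (Pow Y)"
proof
  assume "infinite Y" and "countable (Pow Y)"
  obtain e :: "nat \<Rightarrow> _" where "inj e" "range e \<subseteq> Y"
    using infinite_countable_subset[OF \<open>infinite Y\<close>] by blast
  have "n \<in> inv e ` Y" for n
    using \<open>inj e\<close> \<open>range e \<subseteq> Y\<close> by (intro image_eqI[of _ _ "e n"]) auto
  then have "inv e ` Y = UNIV" by blast
  moreover have "range (from_nat_into (Pow Y)) = Pow Y"
    using \<open>countable (Pow Y)\<close> by (intro range_from_nat_into) auto
  ultimately have "from_nat_into (Pow Y) ` inv e ` Y = Pow Y" by simp
  then show False using Cantors_theorem by (metis image_comp)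
qed

lemma finite_args: "finite A \<Longrightarrow> finite (args A n)"
  unfolding args_def using finite_lists_length_eq[of A n] by (simp add: conj_commute)

lemma countable_ops: "finite A \<Longrightarrow> countable {p. is_op A p}"
proof (rule countable_subset)
  let ?ops = "\<lambda>n. {f. \<forall>xs. (xs \<in> args A n \<longrightarrow> f xs \<in> A) \<and> (xs \<notin> args A n \<longrightarrow> f xs = undefined)}"
  show "{p. is_op A p} \<subseteq> (SIGMA n:UNIV. ?ops n)"
    unfolding is_op_def by auto
  show "finite A \<Longrightarrow> countable (SIGMA n:UNIV. ?ops n)"
    by (intro countable_SIGMA countableI_type countable_finite finite_set_of_finite_funs finite_args)
qed

lemma clone_Int: "clone A C \<Longrightarrow> clone A D \<Longrightarrow> clone A (C \<inter> D)"
  unfolding clone_def by (simp add: Ball_def)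

lemma is_glb_Cl_eq_Int:
  assumes "C \<in> Cl A" "D \<in> Cl A" "is_glb (Cl A) C D E"
  shows "E = C \<inter> D"
proof -
  have "C \<inter> D \<in> Cl A" using assms(1,2) clone_Int unfolding Cl_def by blast
  then show ?thesis using assms(3) unfolding is_glb_def by blast
qed

lemma lattice_embedding_mono:
  assumes "lattice_embedding L M h" "a \<in> L" "b \<in> L" "a \<subseteq> b"
  shows "h a \<subseteq> h b"
proof -
  have "is_glb L a b a" using assms(2-4) unfolding is_glb_def by blast
  then have "is_glb M (h a) (h b) (h a)" using assms(1-3) unfolding lattice_embedding_def by blast
  then show ?thesis unfolding is_glb_def by blast
qed

definition pairwise_meet_family :: "'b set set \<Rightarrow> 'b set \<Rightarrow> ('i \<Rightarrow> 'b set) \<Rightarrow> 'i set \<Rightarrow> bool" where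
  "pairwise_meet_family L P C I \<longleftrightarrow> P \<in> L \<and> (\<forall>i\<in>I. C i \<in> L \<and> P \<subset> C i)
     \<and> (\<forall>i\<in>I. \<forall>j\<in>I. i \<noteq> j \<longrightarrow> is_glb L (C i) (C j) P)"

lemma pairwise_meet_family_countable:
  fixes A :: "'a set"
  assumes "finite A" and emb: "lattice_embedding L (Cl A) h"
    and fam: "pairwise_meet_family L P C I"
  shows "countable I"
proof -
  from emb have hL: "h ` L \<subseteq> Cl A" and inj: "inj_on h L"
    and glb: "\<And>a b c. a \<in> L \<Longrightarrow> b \<in> L \<Longrightarrow> is_glb L a b c \<Longrightarrow> is_glb (Cl A) (h a) (h b) (h c)"
    unfolding lattice_embedding_def by blast+
  from fam have PL: "P \<in> L" and CL: "\<And>i. i \<in> I \<Longrightarrow> C i \<in> L \<and> P \<subset> C i"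
    and meetL: "\<And>i j. i \<in> I \<Longrightarrow> j \<in> I \<Longrightarrow> i \<noteq> j \<Longrightarrow> is_glb L (C i) (C j) P"
    unfolding pairwise_meet_family_def by blast+
  have hC: "h (C i) \<in> Cl A" if "i \<in> I" for i using hL CL[OF that] by blast
  have hP: "h P \<subset> h (C i)" if "i \<in> I" for i
  proof
    show "h P \<subseteq> h (C i)" using lattice_embedding_mono[OF emb PL] CL[OF that] by blast
    show "h P \<noteq> h (C i)" using inj PL CL[OF that] unfolding inj_on_def by blast
  qed
  have meet: "h (C i) \<inter> h (C j) = h P" if "i \<in> I" "j \<in> I" "i \<noteq> j" for i j
    using is_glb_Cl_eq_Int[OF hC[OF that(1)] hC[OF that(2)] glb[OF _ _ meetL[OF that]]] CL that
    by blast
  have "\<forall>i\<in>I. \<exists>p. p \<in> h (C i) - h P" using hP by blast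
  then obtain f where f: "\<forall>i\<in>I. f i \<in> h (C i) - h P" by (rule bchoice[THEN exE])
  have "inj_on f I"
  proof (rule inj_onI, rule ccontr)
    fix i j assume "i \<in> I" "j \<in> I" "f i = f j" "i \<noteq> j"
    then have "f i \<in> h (C i) \<inter> h (C j)" using f by auto
    then show False using meet[OF \<open>i \<in> I\<close> \<open>j \<in> I\<close> \<open>i \<noteq> j\<close>] f \<open>i \<in> I\<close> by blast
  qed
  moreover have "f ` I \<subseteq> {p. is_op A p}"
  proof (rule image_subsetI)
    fix i assume "i \<in> I"
    then have "clone A (h (C i))" using hC unfolding Cl_def by simp
    then show "f i \<in> {p. is_op A p}" using f \<open>i \<in> I\<close> unfolding clone_def by blast
  qed
  then have "countable (f ` I)" using countable_ops[OF \<open>finite A\<close>] by (rule countable_subset)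
  ultimately show ?thesis using countable_image_inj_on by blast
qed

definition unary_lift :: "'x set \<Rightarrow> ('x \<Rightarrow> 'x) \<Rightarrow> nat \<Rightarrow> nat \<Rightarrow> 'x operation" where
  "unary_lift X v n j = (n, \<lambda>xs. if xs \<in> args X n then v (xs ! j) else undefined)"

definition retraction_clone :: "'x set \<Rightarrow> ('x \<Rightarrow> 'x) \<Rightarrow> 'x operation set" where
  "retraction_clone X v = {unary_lift X w n j | w n j. w \<in> {id, v} \<and> 1 \<le> n \<and> j < n}"

lemma fst_unary_lift [simp]: "fst (unary_lift X v n j) = n"
  by (simp add: unary_lift_def)

lemma unary_lift_in_retraction_clone:
  "w \<in> {id, v} \<Longrightarrow> 1 \<le> n \<Longrightarrow> j < n \<Longrightarrow> unary_lift X w n j \<in> retraction_clone X v"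
  unfolding retraction_clone_def by blast

lemma retraction_cloneE:
  assumes "p \<in> retraction_clone X v"
  obtains w n j where "p = unary_lift X w n j" "w \<in> {id, v}" "1 \<le> n" "j < n"
  using assms unfolding retraction_clone_def by blast

lemma nth_in_args: "xs \<in> args X n \<Longrightarrow> j < n \<Longrightarrow> xs ! j \<in> X"
  unfolding args_def by auto

lemma is_op_unary_lift:
  assumes "v ` X \<subseteq> X" "1 \<le> n" "j < n"
  shows "is_op X (unary_lift X v n j)"
proof -
  have "v (xs ! j) \<in> X" if "xs \<in> args X n" for xs
    using assms(1,3) nth_in_args[OF that] by blast
  then show ?thesis using assms(2) unfolding is_op_def unary_lift_def by auto
qed

lemma unary_lift_cong:
  assumes "\<And>x. x \<in> X \<Longrightarrow> v x = w x" "j < n"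
  shows "unary_lift X v n j = unary_lift X w n j"
  using assms nth_in_args[of _ X n j] unfolding unary_lift_def by (auto simp: fun_eq_iff)

lemma unary_lift_eqD:
  assumes "unary_lift X v n j = unary_lift X w n k" "j < n" "k < n" "x \<in> X"
  shows "v x = w x"
proof -
  have "replicate n x \<in> args X n" unfolding args_def using assms(4) by auto
  then have "snd (unary_lift X u n i) (replicate n x) = u x" if "i < n" for u i
    using that by (simp add: unary_lift_def)
  then show ?thesis using assms(1-3) by metis
qed

lemma compose_unary_lift:
  assumes "j < length gs" "\<forall>g\<in>set gs. is_op X g \<and> fst g = m"
    and "gs ! j = unary_lift X w m k"
  shows "compose X (unary_lift X v (length gs) j) gs = unary_lift X (v \<circ> w) m k"
proof -
  have hd: "fst (hd gs) = m" using assms(1,2) by (cases gs) auto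
  have "snd (compose X (unary_lift X v (length gs) j) gs) xs = snd (unary_lift X (v \<circ> w) m k) xs"
    for xs
  proof (cases "xs \<in> args X m")
    case True
    then have "\<forall>g\<in>set gs. snd g xs \<in> X" using assms(2) unfolding is_op_def by auto
    then have "map (\<lambda>g. snd g xs) gs \<in> args X (length gs)" by (auto simp: args_def)
    with True assms(1,3) show ?thesis unfolding compose_def unary_lift_def hd by simp
  qed (simp add: compose_def unary_lift_def hd)
  then show ?thesis by (simp add: compose_def unary_lift_def hd prod_eq_iff fun_eq_iff)
qed

lemma clone_retraction_clone:
  assumes "v ` X \<subseteq> X" and idem: "\<And>x. x \<in> X \<Longrightarrow> v (v x) = v x"
  shows "clone X (retraction_clone X v)"
proof (unfold clone_def, intro conjI ballI allI impI)
  show ops: "is_op X p" if "p \<in> retraction_clone X v" for p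
    using that
  proof (rule retraction_cloneE)
    fix w n j assume "p = unary_lift X w n j" "w \<in> {id, v}" "1 \<le> n" "j < n"
    moreover from \<open>w \<in> {id, v}\<close> have "w ` X \<subseteq> X" using assms(1) by auto
    ultimately show "is_op X p" using is_op_unary_lift by blast
  qed
  show "proj X n i \<in> retraction_clone X v" if "1 \<le> n \<and> i < n" for n i
  proof -
    have "proj X n i = unary_lift X id n i" unfolding proj_def unary_lift_def id_def ..
    then show ?thesis using that unary_lift_in_retraction_clone[of id v n i X] by simp
  qed
  fix f gs m
  assume "f \<in> retraction_clone X v \<and> length gs = fst f \<and> set gs \<subseteq> retraction_clone X v
    \<and> (\<forall>g\<in>set gs. fst g = m)"
  then have f: "f \<in> retraction_clone X v" and len: "length gs = fst f"
    and gs: "\<forall>g\<in>set gs. g \<in> retraction_clone X v \<and> fst g = m" by auto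
  obtain u n j where u: "f = unary_lift X u n j" "u \<in> {id, v}" "j < n"
    using f by (rule retraction_cloneE)
  have "j < length gs" using len u by simp
  then have "gs ! j \<in> retraction_clone X v" "fst (gs ! j) = m" using gs by auto
  then obtain w k where w: "gs ! j = unary_lift X w m k" "w \<in> {id, v}" "1 \<le> m" "k < m"
    by (metis fst_unary_lift retraction_cloneE)
  obtain w' where w': "w' \<in> {id, v}" "\<And>x. x \<in> X \<Longrightarrow> (u \<circ> w) x = w' x"
  proof (cases "u = id")
    case True then show ?thesis using that[of w] w(2) by simp
  next
    case False then have "u = v" using u(2) by simp
    then show ?thesis using that[of v] w(2) idem by auto
  qed
  have "compose X f gs = unary_lift X (u \<circ> w) m k"
    using compose_unary_lift[OF \<open>j < length gs\<close> _ w(1)] gs ops u(1) len by auto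
  also have "\<dots> = unary_lift X w' m k" using unary_lift_cong w'(2) w(4) by blast
  finally show "compose X f gs \<in> retraction_clone X v"
    using unary_lift_in_retraction_clone w'(1) w(3,4) by simp
qed

lemma local_clone_if_finite_arities:
  assumes cl: "clone X C" and fin: "\<And>n. finite {p \<in> C. fst p = n}"
  shows "local_clone X C"
  unfolding local_clone_def
proof (intro conjI cl allI impI)
  fix g
  assume g: "is_op X g \<and> (\<forall>B. finite B \<and> B \<subseteq> args X (fst g) \<longrightarrow>
               (\<exists>f\<in>C. fst f = fst g \<and> (\<forall>xs\<in>B. snd f xs = snd g xs)))"
  let ?F = "{p \<in> C. fst p = fst g}"
  show "g \<in> C"
  proof (rule ccontr)
    assume "g \<notin> C"
    have "\<exists>xs. xs \<in> args X (fst g) \<and> snd p xs \<noteq> snd g xs" if "p \<in> ?F" for p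
    proof (rule ccontr)
      assume "\<nexists>xs. xs \<in> args X (fst g) \<and> snd p xs \<noteq> snd g xs"
      moreover have "is_op X p" using cl that unfolding clone_def by blast
      ultimately have "snd p xs = snd g xs" for xs
        using g that unfolding is_op_def by (cases "xs \<in> args X (fst g)") auto
      then have "p = g" using that by (simp add: prod_eq_iff fun_eq_iff)
      then show False using that \<open>g \<notin> C\<close> by simp
    qed
    then have "\<forall>p\<in>?F. \<exists>xs. xs \<in> args X (fst g) \<and> snd p xs \<noteq> snd g xs" by blast
    then obtain c where c: "\<forall>p\<in>?F. c p \<in> args X (fst g) \<and> snd p (c p) \<noteq> snd g (c p)"
      by (rule bchoice[THEN exE])
    \<comment> \<open>no operation of C of the arity of g agrees with g on the finite set of witnesses\<close>
    have "finite (c ` ?F)" "c ` ?F \<subseteq> args X (fst g)" using fin c by auto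
    then have "\<exists>f\<in>C. fst f = fst g \<and> (\<forall>xs\<in>c ` ?F. snd f xs = snd g xs)" using g by blast
    then obtain f where "f \<in> ?F" "snd f (c f) = snd g (c f)" by blast
    then show False using c by blast
  qed
qed

lemma retraction_clone_local:
  assumes "v ` X \<subseteq> X" "\<And>x. x \<in> X \<Longrightarrow> v (v x) = v x"
  shows "retraction_clone X v \<in> Cl_loc X"
proof -
  have "{p \<in> retraction_clone X v. fst p = n} \<subseteq> (\<lambda>(w, j). unary_lift X w n j) ` ({id, v} \<times> {..<n})" for n
    unfolding retraction_clone_def by (auto simp: unary_lift_def)
  then have "finite {p \<in> retraction_clone X v. fst p = n}" for n
    by (rule finite_subset) auto
  then show ?thesis
    unfolding Cl_loc_def using local_clone_if_finite_arities clone_retraction_clone assms by blast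
qed

lemma retraction_clone_id_subset: "retraction_clone X id \<subseteq> retraction_clone X v"
  unfolding retraction_clone_def by blast

lemma retraction_clone_neq_id:
  assumes "x \<in> X" "v x \<noteq> x"
  shows "retraction_clone X v \<noteq> retraction_clone X id"
proof
  assume "retraction_clone X v = retraction_clone X id"
  moreover have "unary_lift X v 1 0 \<in> retraction_clone X v"
    unfolding retraction_clone_def by blast
  ultimately obtain j where "unary_lift X v 1 0 = unary_lift X id 1 j" "j < 1"
    unfolding retraction_clone_def unary_lift_def by auto
  then show False using unary_lift_eqD assms by fastforce
qed

lemma retraction_clone_Int:
  assumes "x \<in> X" "v x \<noteq> x" "z \<in> X" "v z \<noteq> w z"
  shows "retraction_clone X v \<inter> retraction_clone X w = retraction_clone X id"
proof (intro equalityI subsetI)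
  fix p assume "p \<in> retraction_clone X v \<inter> retraction_clone X w"
  then obtain v' n j w' n' k where p: "p = unary_lift X v' n j" "v' \<in> {id, v}" "1 \<le> n" "j < n"
    and p': "p = unary_lift X w' n' k" "w' \<in> {id, w}" "k < n'"
    unfolding retraction_clone_def by blast
  moreover from this have "n' = n" by (simp add: unary_lift_def)
  ultimately have "v' x = w' x" if "x \<in> X" for x
    using unary_lift_eqD[OF _ _ _ that] by metis
  then have "v' = id" using p(2) p'(2) assms by auto
  then show "p \<in> retraction_clone X id" using p unfolding retraction_clone_def by blast
qed (use retraction_clone_id_subset in blast)

lemma Cl_loc_uncountable_pairwise_meet_family:
  fixes X :: "'x set"
  assumes "infinite X"
  obtains P C and I :: "'x set set" where "uncountable I" "pairwise_meet_family (Cl_loc X) P C I"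
proof -
  obtain a0 where "a0 \<in> X" using assms infinite_imp_nonempty by blast
  moreover have "infinite (X - {a0})" using assms by simp
  then obtain a1 where "a1 \<in> X - {a0}" using infinite_imp_nonempty by blast
  ultimately have a: "a0 \<in> X" "a1 \<in> X" "a0 \<noteq> a1" by auto
  define I where "I = Pow (X - {a0, a1})"
  define r where "r T x = (if x \<in> T then x else a0)" for T and x :: 'x
  define P where "P = retraction_clone X id"
  define C where "C T = retraction_clone X (r T)" for T
  have r_into: "r T ` X \<subseteq> X" if "T \<in> I" for T using that a unfolding r_def I_def by auto
  have r_idem: "r T (r T x) = r T x" for T x unfolding r_def by simp
  have r_a1: "r T a1 \<noteq> a1" if "T \<in> I" for T using that a unfolding r_def I_def by auto
  have r_sep: "r T z \<noteq> r T' z" if "T \<in> I" "z \<in> T" "z \<notin> T'" for T T' z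
    using that unfolding r_def I_def by auto
  have PL: "P \<in> Cl_loc X" unfolding P_def by (rule retraction_clone_local) auto
  have CL: "C T \<in> Cl_loc X \<and> P \<subset> C T" if "T \<in> I" for T
    using retraction_clone_local[OF r_into[OF that] r_idem] retraction_clone_id_subset
      retraction_clone_neq_id[of a1 X "r T", OF a(2) r_a1[OF that]]
    unfolding C_def P_def by auto
  have meet: "C T \<inter> C T' = P" if "T \<in> I" "T' \<in> I" "z \<in> T" "z \<notin> T'" for T T' z
    unfolding C_def P_def
    by (rule retraction_clone_Int[of a1 X "r T" z "r T'"]) (use a r_a1 r_sep that in \<open>auto simp: I_def\<close>)
  have glb: "is_glb (Cl_loc X) (C T) (C T') P" if "T \<in> I" "T' \<in> I" "T \<noteq> T'" for T T'
  proof -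
    from \<open>T \<noteq> T'\<close> consider z where "z \<in> T" "z \<notin> T'" | z where "z \<in> T'" "z \<notin> T" by blast
    then have "C T \<inter> C T' = P"
    proof cases
      case 1 then show ?thesis using meet that by blast
    next
      case 2 then show ?thesis using meet[of T' T] that by (simp add: Int_commute)
    qed
    then show ?thesis using PL unfolding is_glb_def by blast
  qed
  have "uncountable I" unfolding I_def using assms by (intro uncountable_Pow) auto
  moreover have "pairwise_meet_family (Cl_loc X) P C I"
    unfolding pairwise_meet_family_def using PL CL glb by blast
  ultimately show ?thesis by (rule that)
qed

theorem corollary2p5:
  fixes X :: "'x set"
  assumes "countable X" and "infinite X"
  shows "\<not> (\<exists>(A :: 'a set) h. finite A \<and> lattice_embedding (Cl_loc X) (Cl A) h)"
proof
  assume "\<exists>(A :: 'a set) h. finite A \<and> lattice_embedding (Cl_loc X) (Cl A) h"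
  then obtain A :: "'a set" and h where "finite A" "lattice_embedding (Cl_loc X) (Cl A) h"
    by blast
  moreover obtain P C and I :: "'x set set"
    where "uncountable I" "pairwise_meet_family (Cl_loc X) P C I"
    using Cl_loc_uncountable_pairwise_meet_family[OF \<open>infinite X\<close>] .
  ultimately show False using pairwise_meet_family_countable by blast
qed

end
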